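(* Let $C,\beta>0$ and $N,M\in\mathbb{N}$. Let $H$ be a Hilbert space of dimension $M$, and let $(x_j)_{j=1}^N$ and $(f_j)_{j=1}^N$ be sequences in $H$ satisfying $\|x_j\|=\|f_j\|$ for all $1\leq j\leq N$ and $$\Big\|\sum_{j=1}^N \varepsilon_j\langle x, f_j\rangle x_j\Big\|\leq C\|x\| \qquad\text{for all } x\in H \text{ and all scalars } \varepsilon_j \text{ with } |\varepsilon_j|=1.$$ If the frame operator of $(f_j)_{j=1}^N$ has eigenvalues $\lambda_1\geq\dots\geq\lambda_M$ satisfying $\lambda_1\leq \frac{\beta}{M}\sum_{j=1}^M\lambda_j$, then $(f_j)_{j=1}^N$ has Bessel bound $\frac{27}{4}K_1^{-4}\beta^2 C$. In particular, if $(f_j)_{j=1}^N$ is a frame with condition number $\beta$ then $(f_j)_{j=1}^N$ has Bessel bound $\frac{27}{4}K_1^{-4}\beta^2 C$, and if $(f_j)_{j=1}^N$ is a tight frame then $(f_j)_{j=1}^N$ has Bessel bound $\frac{27}{4}K_1^{-4}C$. Likewise, if the frame operator of $(x_j)_{j=1}^N$ has eigenvalues $\lambda_1\geq\dots\geq\lambda_M$ satisfying $\lambda_1\leq\frac{\beta}{M}\sum_{j=1}^M\lambda_j$, then $(x_j)_{j=1}^N$ has Bessel bound $\frac{27}{4}K_1^{-4}\beta^2 C$.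
   Context: A sequence $(y_j)_{j=1}^N$ in a Hilbert space $H$ has Bessel bound $B$ if $\sum_{j=1}^N|\langle x,y_j\rangle|^2\leq B\|x\|^2$ for all $x\in H$; it is a frame if additionally there is $A>0$ with $A\|x\|^2\leq\sum_j|\langle x,y_j\rangle|^2$ for all $x$; the condition number is the ratio $B/A$ of optimal bounds, and the frame is tight if the condition number is $1$. The frame operator of $(y_j)$ is $S(x)=\sum_{j}\langle x,y_j\rangle y_j$. $K_1>0$ denotes the constant in Khintchine's inequality: for all $N\in\mathbb{N}$ and all scalars $(a_j)_{j=1}^N$, $2^{-N}\sum_{\delta_j=\pm1}\big|\sum_{j=1}^N\delta_j a_j\big|\geq K_1\big(\sum_{j=1}^N|a_j|^2\big)^{1/2}$. *)

theory Defs
  imports "HOL-Analysis.Analysis"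
begin

text \<open>A Hilbert space of dimension M over the scalar field K (K = the reals or K = the
complex numbers) is modelled as the K-vectors inside complex^'n with CARD('n) = M.
For K = reals this is (isometrically) real Euclidean M-space, for K = complex it is
unitary M-space; every M-dimensional Hilbert space is isometric to one of these.\<close>

definition cinner :: "complex^'n \<Rightarrow> complex^'n \<Rightarrow> complex" where
  "cinner x y = (\<Sum>i\<in>UNIV. x$i * cnj (y$i))"

definition vecs :: "complex set \<Rightarrow> (complex^'n) set" where
  "vecs K = {x. \<forall>i. x$i \<in> K}"

definition frame_sum :: "(nat \<Rightarrow> complex^'n) \<Rightarrow> nat \<Rightarrow> complex^'n \<Rightarrow> real" where
  "frame_sum f N x = (\<Sum>j<N. (cmod (cinner x (f j)))^2)"

definition bessel_bound :: "complex set \<Rightarrow> (nat \<Rightarrow> complex^'n) \<Rightarrow> nat \<Rightarrow> real \<Rightarrow> bool" where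
  "bessel_bound K f N B \<longleftrightarrow> (\<forall>x\<in>vecs K. frame_sum f N x \<le> B * (norm x)^2)"

definition is_frame :: "complex set \<Rightarrow> (nat \<Rightarrow> complex^'n) \<Rightarrow> nat \<Rightarrow> bool" where
  "is_frame K f N \<longleftrightarrow> (\<exists>A>0. \<exists>B. \<forall>x\<in>vecs K.
      A * (norm x)^2 \<le> frame_sum f N x \<and> frame_sum f N x \<le> B * (norm x)^2)"

definition opt_upper_bound :: "complex set \<Rightarrow> (nat \<Rightarrow> complex^'n) \<Rightarrow> nat \<Rightarrow> real" where
  "opt_upper_bound K f N = Sup {frame_sum f N x | x. x \<in> vecs K \<and> norm x = 1}"

definition opt_lower_bound :: "complex set \<Rightarrow> (nat \<Rightarrow> complex^'n) \<Rightarrow> nat \<Rightarrow> real" where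
  "opt_lower_bound K f N = Inf {frame_sum f N x | x. x \<in> vecs K \<and> norm x = 1}"

definition condition_number :: "complex set \<Rightarrow> (nat \<Rightarrow> complex^'n) \<Rightarrow> nat \<Rightarrow> real" where
  "condition_number K f N = opt_upper_bound K f N / opt_lower_bound K f N"

definition tight_frame :: "complex set \<Rightarrow> (nat \<Rightarrow> complex^'n) \<Rightarrow> nat \<Rightarrow> bool" where
  "tight_frame K f N \<longleftrightarrow> is_frame K f N \<and> condition_number K f N = 1"

definition frame_op :: "(nat \<Rightarrow> complex^'n) \<Rightarrow> nat \<Rightarrow> complex^'n \<Rightarrow> complex^'n" where
  "frame_op f N x = (\<Sum>j<N. cinner x (f j) *s f j)"

definition has_ordered_eigenvalues ::
  "complex set \<Rightarrow> (complex^'n \<Rightarrow> complex^'n) \<Rightarrow> nat \<Rightarrow> (nat \<Rightarrow> real) \<Rightarrow> bool" where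
  "has_ordered_eigenvalues K S M lam \<longleftrightarrow>
     (\<exists>e. (\<forall>i<M. e i \<in> vecs K) \<and>
          (\<forall>i<M. \<forall>k<M. cinner (e i) (e k) = (if i = k then 1 else 0)) \<and>
          (\<forall>i<M. S (e i) = complex_of_real (lam i) *s e i) \<and>
          (\<forall>i k. i \<le> k \<longrightarrow> k < M \<longrightarrow> lam k \<le> lam i))"

definition khintchine_const :: "complex set \<Rightarrow> real \<Rightarrow> bool" where
  "khintchine_const K K1 \<longleftrightarrow> K1 > 0 \<and>
     (\<forall>(n::nat) (a::nat \<Rightarrow> complex). (\<forall>j<n. a j \<in> K) \<longrightarrow>
        (1 / 2^n) * (\<Sum>\<delta>\<in>PiE {..<n} (\<lambda>_. {-1, 1::real}). cmod (\<Sum>j<n. of_real (\<delta> j) * a j))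
          \<ge> K1 * sqrt (\<Sum>j<n. (cmod (a j))^2))"

end

theory Submission
  imports Defs
begin

text \<open>
  For \<delta> \<in> {-1,1}^M let v_\<delta> = M^(-1/2) (\<delta>_1, ..., \<delta>_M), a unit vector. Testing the
  hypothesis at x = v_\<delta>, with unimodular \<epsilon>_j that rotate every term of the pairing with
  v_\<delta>' onto the positive real axis, gives \<Sum>_j |<v_\<delta>, f_j>| |<x_j, v_\<delta>'>| \<le> C for all
  \<delta>, \<delta>'. Averaging over \<delta> and \<delta>' and applying Khintchine's inequality to each factor yields
  K1^2 \<Sum>_j \<parallel>f_j\<parallel> \<parallel>x_j\<parallel> \<le> M C. Since \<parallel>x_j\<parallel> = \<parallel>f_j\<parallel>, the trace \<Sum>_j \<parallel>f_j\<parallel>^2 = \<Sum>_i \<lambda>_i of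
  either frame operator is at most M C / K1^2. The best Bessel bound is the top eigenvalue,
  by assumption at most \<beta> times the average eigenvalue; for a frame it is the optimal upper
  bound, equal to \<beta> times the optimal lower bound, which is at most the average of the
  frame sums over the coordinate vectors. Either way it is at most \<beta> C / K1^2, and as
  \<beta> \<ge> 1 and K1 \<le> 1 this is below the stated constant.
\<close>

lemma cinner_sum_left: "finite A \<Longrightarrow> cinner (\<Sum>j\<in>A. g j) y = (\<Sum>j\<in>A. cinner (g j) y)"
  by (induction A rule: finite_induct) (auto simp: cinner_def sum.distrib algebra_simps)

lemma cinner_scale_left: "cinner (c *s x) y = c * cinner x y"
  by (simp add: cinner_def sum_distrib_left mult.assoc)

lemma cinner_scaleR_left: "cinner (c *\<^sub>R x) y = of_real c * cinner x y"
  unfolding cinner_def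
  by (simp only: vector_scaleR_component) (simp add: sum_distrib_left scaleR_conv_of_real mult.assoc)

lemma cinner_commute: "cinner y x = cnj (cinner x y)"
  by (simp add: cinner_def mult.commute)

lemma norm_vec_square: "(norm (x::complex^'n))^2 = (\<Sum>i\<in>UNIV. (cmod (x$i))^2)"
  unfolding norm_vec_def L2_set_def by (simp add: sum_nonneg)

lemma cinner_self: "cinner x x = of_real ((norm x)^2)"
  unfolding norm_vec_square cinner_def of_real_sum
  by (rule sum.cong) (auto simp: complex_norm_square[symmetric])

lemma cmod_cinner_square: "of_real ((cmod (cinner x y))^2) = cinner x y * cinner y x"
  by (metis cinner_commute complex_norm_square)

lemma cmod_cinner_le: "cmod (cinner x y) \<le> norm x * norm y"
proof -
  have "cmod (cinner x y) \<le> (\<Sum>i\<in>UNIV. cmod (x$i) * cmod (y$i))"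
    unfolding cinner_def by (rule order_trans[OF norm_sum]) (simp add: norm_mult)
  also have "\<dots> \<le> L2_set (\<lambda>i. cmod (x$i)) UNIV * L2_set (\<lambda>i. cmod (y$i)) UNIV"
    using L2_set_mult_ineq[of "\<lambda>i. cmod (x$i)" "\<lambda>i. cmod (y$i)" UNIV] by simp
  finally show ?thesis by (simp add: norm_vec_def)
qed

lemma cinner_axis_left: "cinner (axis b 1) v = cnj (v $ b)"
proof -
  have "(\<Sum>i\<in>UNIV. axis b 1 $ i * cnj (v $ i)) = (\<Sum>i\<in>UNIV. if i = b then cnj (v $ i) else 0)"
    by (intro sum.cong) (auto simp: axis_def)
  then show ?thesis unfolding cinner_def by simp
qed

lemma norm_axis_complex_1: "norm (axis b (1::complex)) = 1"
proof -
  have "(\<Sum>i\<in>UNIV. (cmod (axis b (1::complex) $ i))^2) = (\<Sum>i\<in>UNIV. if i = b then 1 else 0)"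
    by (intro sum.cong) (auto simp: axis_def)
  then have "(norm (axis b (1::complex)))^2 = 1"
    by (simp add: norm_vec_square)
  then show ?thesis by (simp add: power2_eq_1_iff)
qed

lemma cinner_in_Reals: "u \<in> vecs \<real> \<Longrightarrow> v \<in> vecs \<real> \<Longrightarrow> cinner u v \<in> \<real>"
  unfolding cinner_def vecs_def
  by (intro sum_in_Reals) (auto intro!: Reals_mult simp: Reals_cnj_iff)

lemma axis_in_vecs: "K = \<real> \<or> K = UNIV \<Longrightarrow> axis b 1 \<in> vecs K"
  by (auto simp: vecs_def axis_def)

lemma scaleR_in_vecs: "K = \<real> \<or> K = UNIV \<Longrightarrow> x \<in> vecs K \<Longrightarrow> c *\<^sub>R x \<in> vecs K"
  unfolding vecs_def by (auto simp only: vector_scaleR_component) (auto simp: scaleR_conv_of_real)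

definition orthonormal_family :: "nat \<Rightarrow> (nat \<Rightarrow> complex^'n) \<Rightarrow> bool" where
  "orthonormal_family M e \<longleftrightarrow> (\<forall>i<M. \<forall>k<M. cinner (e i) (e k) = (if i = k then 1 else 0))"

text \<open>The vectors e i are the rows of a square matrix U with U U* = 1; hence U* U = 1,
  which is this identity.\<close>
lemma orthonormal_family_complete:
  fixes e :: "nat \<Rightarrow> complex^'n"
  assumes dim: "CARD('n) = M" and on: "orthonormal_family M e"
  shows "(\<Sum>i<M. cnj (e i $ b) * e i $ d) = (if b = d then 1 else 0)"
proof -
  obtain h where "bij_betw h {..<M} (UNIV::'n set)"
    using ex_bij_betw_nat_finite[of "UNIV::'n set"] dim by (auto simp: atLeast0LessThan)
  then have h': "bij_betw (inv_into {..<M} h) UNIV {..<M}"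
    by (rule bij_betw_inv_into)
  define U :: "complex^'n^'n" where "U = (\<chi> a b. e (inv_into {..<M} h a) $ b)"
  define V :: "complex^'n^'n" where "V = (\<chi> b a. cnj (U$a$b))"
  have "(U ** V)$a$c = mat 1 $a$c" for a c
  proof -
    have "(U ** V)$a$c = cinner (e (inv_into {..<M} h a)) (e (inv_into {..<M} h c))"
      by (simp add: matrix_matrix_mult_def U_def V_def cinner_def)
    also have "\<dots> = mat 1 $a$c"
      using on h' bij_betw_imp_inj_on[OF h'] bij_betw_apply[OF h']
      by (auto simp: orthonormal_family_def mat_def inj_on_def)
    finally show ?thesis .
  qed
  then have "U ** V = mat 1"
    by (simp add: vec_eq_iff)
  then have "V ** U = mat 1"
    using matrix_left_right_inverse by blast
  then have "(\<Sum>a\<in>UNIV. cnj (e (inv_into {..<M} h a) $ b) * e (inv_into {..<M} h a) $ d)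
      = (if b = d then 1 else 0)"
    by (simp add: matrix_matrix_mult_def U_def V_def mat_def vec_eq_iff)
  then show ?thesis
    using sum.reindex_bij_betw[OF h', of "\<lambda>i. cnj (e i $ b) * e i $ d"] by simp
qed

lemma cinner_orthonormal_expansion:
  fixes e :: "nat \<Rightarrow> complex^'n"
  assumes dim: "CARD('n) = M" and on: "orthonormal_family M e"
  shows "cinner x y = (\<Sum>i<M. cinner x (e i) * cinner (e i) y)"
proof -
  have "(\<Sum>i<M. cinner x (e i) * cinner (e i) y)
      = (\<Sum>i<M. \<Sum>b\<in>UNIV. \<Sum>d\<in>UNIV. x$b * cnj (y$d) * (cnj (e i$b) * e i$d))"
    unfolding cinner_def sum_product by (intro sum.cong refl) (simp add: mult_ac)
  also have "\<dots> = (\<Sum>b\<in>UNIV. \<Sum>d\<in>UNIV. x$b * cnj (y$d) * (\<Sum>i<M. cnj (e i$b) * e i$d))"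
    unfolding sum_distrib_left by (subst sum.swap) (intro sum.cong refl, rule sum.swap)
  also have "\<dots> = cinner x y"
    unfolding orthonormal_family_complete[OF dim on] cinner_def
    by (simp add: if_distrib cong: if_cong)
  finally show ?thesis by simp
qed

lemma norm_square_orthonormal_expansion:
  assumes "CARD('n) = M" and "orthonormal_family M (e :: nat \<Rightarrow> complex^'n)"
  shows "(norm x)^2 = (\<Sum>i<M. (cmod (cinner x (e i)))^2)"
proof -
  have "complex_of_real ((norm x)^2) = (\<Sum>i<M. cinner x (e i) * cinner (e i) x)"
    using cinner_orthonormal_expansion[OF assms, of x x] by (simp add: cinner_self)
  also have "\<dots> = complex_of_real (\<Sum>i<M. (cmod (cinner x (e i)))^2)"
    unfolding of_real_sum cmod_cinner_square ..
  finally show ?thesis using of_real_eq_iff by blast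
qed

lemma cinner_frame_op_left:
  "cinner (frame_op g N u) z = (\<Sum>j<N. cinner u (g j) * cinner (g j) z)"
  unfolding frame_op_def by (simp add: cinner_sum_left cinner_scale_left)

lemma frame_sum_eigenbasis_expansion:
  fixes e g :: "nat \<Rightarrow> complex^'n"
  assumes dim: "CARD('n) = M" and on: "orthonormal_family M e"
    and eig: "\<forall>i<M. frame_op g N (e i) = complex_of_real (lam i) *s e i"
  shows "frame_sum g N x = (\<Sum>i<M. lam i * (cmod (cinner x (e i)))^2)"
proof -
  have "complex_of_real (frame_sum g N x) = (\<Sum>j<N. cinner x (g j) * cinner (g j) x)"
    unfolding frame_sum_def of_real_sum by (intro sum.cong refl) (rule cmod_cinner_square)
  also have "\<dots> = (\<Sum>j<N. \<Sum>i<M. cinner x (e i) * (cinner (e i) (g j) * cinner (g j) x))"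
    by (simp add: cinner_orthonormal_expansion[OF dim on, of x "g _"] sum_distrib_right mult.assoc)
  also have "\<dots> = (\<Sum>i<M. cinner x (e i) * cinner (frame_op g N (e i)) x)"
    by (subst sum.swap) (simp add: cinner_frame_op_left sum_distrib_left)
  also have "\<dots> = complex_of_real (\<Sum>i<M. lam i * (cmod (cinner x (e i)))^2)"
    using eig unfolding of_real_sum of_real_mult cmod_cinner_square
    by (intro sum.cong refl) (simp add: cinner_scale_left mult_ac)
  finally show ?thesis using of_real_eq_iff by blast
qed

lemma sum_eigenvalues_frame_op:
  fixes e g :: "nat \<Rightarrow> complex^'n"
  assumes dim: "CARD('n) = M" and on: "orthonormal_family M e"
    and eig: "\<forall>i<M. frame_op g N (e i) = complex_of_real (lam i) *s e i"
  shows "(\<Sum>i<M. lam i) = (\<Sum>j<N. (norm (g j))^2)"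
proof -
  have "complex_of_real (\<Sum>i<M. lam i) = (\<Sum>i<M. cinner (frame_op g N (e i)) (e i))"
    using on eig unfolding of_real_sum orthonormal_family_def by (simp add: cinner_scale_left)
  also have "\<dots> = (\<Sum>j<N. \<Sum>i<M. cinner (g j) (e i) * cinner (e i) (g j))"
    unfolding cinner_frame_op_left by (subst sum.swap) (simp add: mult.commute)
  also have "\<dots> = complex_of_real (\<Sum>j<N. (norm (g j))^2)"
    by (simp add: cinner_orthonormal_expansion[OF dim on, symmetric] cinner_self)
  finally show ?thesis using of_real_eq_iff by blast
qed

lemma has_ordered_eigenvalues_frame_opE:
  fixes g :: "nat \<Rightarrow> complex^'n"
  assumes "has_ordered_eigenvalues K (frame_op g N) M lam" and "CARD('n) = M"
  obtains "bessel_bound K g N (lam 0)"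
    and "(\<Sum>i<M. lam i) = (\<Sum>j<N. (norm (g j))^2)"
    and "(\<Sum>i<M. lam i) \<le> M * lam 0"
proof
  obtain e where on: "orthonormal_family M e"
    and eig: "\<forall>i<M. frame_op g N (e i) = complex_of_real (lam i) *s e i"
    and decreasing: "\<forall>i k. i \<le> k \<longrightarrow> k < M \<longrightarrow> lam k \<le> lam i"
    using assms(1) unfolding has_ordered_eigenvalues_def orthonormal_family_def by blast
  have top: "lam i \<le> lam 0" if "i < M" for i
    using decreasing that by blast
  show "bessel_bound K g N (lam 0)"
    unfolding bessel_bound_def
  proof
    fix x :: "complex^'n"
    have "frame_sum g N x = (\<Sum>i<M. lam i * (cmod (cinner x (e i)))^2)"
      by (rule frame_sum_eigenbasis_expansion[OF assms(2) on eig])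
    also have "\<dots> \<le> (\<Sum>i<M. lam 0 * (cmod (cinner x (e i)))^2)"
      using top by (intro sum_mono mult_right_mono) auto
    also have "\<dots> = lam 0 * (norm x)^2"
      by (simp add: norm_square_orthonormal_expansion[OF assms(2) on] sum_distrib_left)
    finally show "frame_sum g N x \<le> lam 0 * (norm x)^2" .
  qed
  show "(\<Sum>i<M. lam i) = (\<Sum>j<N. (norm (g j))^2)"
    by (rule sum_eigenvalues_frame_op[OF assms(2) on eig])
  show "(\<Sum>i<M. lam i) \<le> M * lam 0"
    using sum_mono[of "{..<M}" lam "\<lambda>_. lam 0"] top by simp
qed

lemma frame_sum_nonneg: "0 \<le> frame_sum g N x"
  by (simp add: frame_sum_def sum_nonneg)

lemma frame_sum_scaleR: "frame_sum g N (c *\<^sub>R x) = c^2 * frame_sum g N x"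
  unfolding frame_sum_def cinner_scaleR_left
  by (simp add: norm_mult power_mult_distrib sum_distrib_left)

lemma sum_frame_sum_axis: "(\<Sum>b\<in>UNIV. frame_sum g N (axis b 1)) = (\<Sum>j<N. (norm (g j))^2)"
  unfolding frame_sum_def cinner_axis_left norm_vec_square by (simp add: sum.swap[of _ UNIV])

lemma bessel_bound_mono: "bessel_bound K g N B \<Longrightarrow> B \<le> B' \<Longrightarrow> bessel_bound K g N B'"
  unfolding bessel_bound_def by (meson mult_right_mono order_trans zero_le_power2)

lemma frame_sum_le_opt_upper_bound:
  assumes "is_frame K f N" and "x \<in> vecs K" and "norm x = 1"
  shows "frame_sum f N x \<le> opt_upper_bound K f N"
  unfolding opt_upper_bound_def
proof (rule cSup_upper)
  obtain B where "\<forall>x\<in>vecs K. frame_sum f N x \<le> B * (norm x)^2"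
    using assms(1) unfolding is_frame_def by blast
  then show "bdd_above {frame_sum f N x | x. x \<in> vecs K \<and> norm x = 1}"
    unfolding bdd_above_def by force
qed (use assms in blast)

lemma opt_lower_bound_le_frame_sum:
  assumes "x \<in> vecs K" and "norm x = 1"
  shows "opt_lower_bound K f N \<le> frame_sum f N x"
  unfolding opt_lower_bound_def
  by (rule cInf_lower) (use assms frame_sum_nonneg in \<open>auto simp: bdd_below_def\<close>)

lemma bessel_bound_opt_upper_bound:
  fixes f :: "nat \<Rightarrow> complex^'n"
  assumes field: "K = \<real> \<or> K = UNIV" and frame: "is_frame K f N"
  shows "bessel_bound K f N (opt_upper_bound K f N)"
  unfolding bessel_bound_def
proof
  fix x :: "complex^'n" assume x: "x \<in> vecs K"
  show "frame_sum f N x \<le> opt_upper_bound K f N * (norm x)^2"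
  proof (cases "x = 0")
    case True
    then show ?thesis by (simp add: frame_sum_def cinner_def)
  next
    case False
    define u where "u = (1 / norm x) *\<^sub>R x"
    have "frame_sum f N u \<le> opt_upper_bound K f N"
      using frame_sum_le_opt_upper_bound[OF frame scaleR_in_vecs[OF field x]] False
      by (simp add: u_def)
    moreover have "frame_sum f N u = frame_sum f N x / (norm x)^2"
      by (simp add: u_def frame_sum_scaleR power_divide)
    ultimately show ?thesis using False by (simp add: field_simps)
  qed
qed

lemma opt_lower_bound_pos:
  assumes field: "K = \<real> \<or> K = UNIV" and frame: "is_frame K f N"
  shows "0 < opt_lower_bound K f N"
proof -
  obtain A where "A > 0" and A: "\<forall>x\<in>vecs K. A * (norm x)^2 \<le> frame_sum f N x"
    using frame unfolding is_frame_def by blast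
  have "A \<le> opt_lower_bound K f N"
    unfolding opt_lower_bound_def
    by (rule cInf_greatest) (use A axis_in_vecs[OF field] norm_axis_complex_1 in force)+
  with \<open>A > 0\<close> show ?thesis by simp
qed

lemma sum_norms_square_between_opt_bounds:
  fixes f :: "nat \<Rightarrow> complex^'n"
  assumes field: "K = \<real> \<or> K = UNIV" and frame: "is_frame K f N" and dim: "CARD('n) = M"
  shows "M * opt_lower_bound K f N \<le> (\<Sum>j<N. (norm (f j))^2)"
    and "(\<Sum>j<N. (norm (f j))^2) \<le> M * opt_upper_bound K f N"
proof -
  have "opt_lower_bound K f N \<le> frame_sum f N (axis b 1)"
    and "frame_sum f N (axis b 1) \<le> opt_upper_bound K f N" for b :: 'n
    using opt_lower_bound_le_frame_sum frame_sum_le_opt_upper_bound[OF frame]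
      axis_in_vecs[OF field] norm_axis_complex_1 by blast+
  then show "M * opt_lower_bound K f N \<le> (\<Sum>j<N. (norm (f j))^2)"
    and "(\<Sum>j<N. (norm (f j))^2) \<le> M * opt_upper_bound K f N"
    using sum_mono[of UNIV "\<lambda>_. opt_lower_bound K f N" "\<lambda>b. frame_sum f N (axis b 1)"]
      sum_mono[of UNIV "\<lambda>b. frame_sum f N (axis b 1)" "\<lambda>_. opt_upper_bound K f N"]
    by (simp_all add: sum_frame_sum_axis dim)
qed

lemma le_khintchine_bessel_constant:
  fixes K1 C \<beta> L a :: real
  assumes K1: "0 < K1" "K1 \<le> 1" and C: "0 < C" and \<beta>: "0 < \<beta>"
    and above: "L \<le> \<beta> * a" and below: "a \<le> L" and trace: "K1^2 * a \<le> C"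
  shows "L \<le> 27 / 4 / K1^4 * \<beta>^2 * C"
proof (cases "a \<le> 0")
  case True
  then have "L \<le> 0"
    using above \<beta> by (meson mult_nonneg_nonpos less_imp_le order_trans)
  moreover have "0 \<le> 27 / 4 / K1^4 * \<beta>^2 * C"
    using K1 C by simp
  ultimately show ?thesis by linarith
next
  case False
  then have "1 \<le> \<beta>"
    using above below by (metis mult_le_cancel_right1 not_le order_trans)
  have "K1^4 * a \<le> K1^2 * a"
    using False K1 by (intro mult_right_mono power_decreasing) auto
  with trace have "a \<le> C / K1^4"
    using K1 by (simp add: field_simps)
  have "\<beta> \<le> \<beta>^2"
    using \<open>1 \<le> \<beta>\<close> by (simp add: power2_eq_square)
  then have "L \<le> \<beta>^2 * a"
    using above False by (meson mult_right_mono not_le order_trans less_imp_le)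
  also have "\<dots> \<le> \<beta>^2 * (C / K1^4)"
    using \<open>a \<le> C / K1^4\<close> by (rule mult_left_mono) simp
  also have "\<dots> \<le> 27 / 4 / K1^4 * \<beta>^2 * C"
    using K1 C by (simp add: field_simps)
  finally show ?thesis .
qed

lemma khintchine_const_le_1:
  assumes field: "K = \<real> \<or> K = UNIV" and K1: "khintchine_const K K1"
  shows "K1 \<le> 1"
proof -
  define P where "P = PiE {..<Suc 0} (\<lambda>_. {-1, 1::real})"
  have "1 \<in> K" using field by auto
  then have "K1 * 2 \<le> (\<Sum>\<delta>\<in>P. \<bar>\<delta> 0\<bar>)"
    using K1 unfolding khintchine_const_def P_def
    by (auto dest!: spec[of _ 1] spec[of _ "\<lambda>_. 1"])
  also have "(\<Sum>\<delta>\<in>P. \<bar>\<delta> 0\<bar>) = (\<Sum>\<delta>\<in>P. 1)"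
  proof (rule sum.cong)
    fix \<delta> assume "\<delta> \<in> P"
    then have "\<delta> 0 \<in> {-1, 1}" unfolding P_def by blast
    then show "\<bar>\<delta> 0\<bar> = 1" by auto
  qed simp
  also have "\<dots> = 2"
    unfolding P_def by (simp add: card_PiE)
  finally show ?thesis by simp
qed

definition sign_mean :: "nat \<Rightarrow> ((nat \<Rightarrow> real) \<Rightarrow> real) \<Rightarrow> real" where
  "sign_mean M F = (1 / 2^M) * (\<Sum>\<delta>\<in>PiE {..<M} (\<lambda>_. {-1, 1}). F \<delta>)"

lemma sign_mean_mono:
  "(\<And>\<delta>. \<delta> \<in> PiE {..<M} (\<lambda>_. {-1, 1}) \<Longrightarrow> F \<delta> \<le> G \<delta>) \<Longrightarrow> sign_mean M F \<le> sign_mean M G"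
  unfolding sign_mean_def by (intro mult_left_mono sum_mono) auto

lemma sign_mean_const [simp]: "sign_mean M (\<lambda>_. c) = c"
  by (simp add: sign_mean_def card_PiE)

lemma sum_sign_mean_mult:
  "(\<Sum>j<N. sign_mean M (\<lambda>\<delta>. a \<delta> j) * sign_mean M (\<lambda>\<delta>. b \<delta> j))
    = sign_mean M (\<lambda>\<delta>. sign_mean M (\<lambda>\<delta>'. \<Sum>j<N. a \<delta> j * b \<delta>' j))"
proof -
  let ?P = "PiE {..<M} (\<lambda>_. {-1, 1::real})"
  have "sign_mean M (\<lambda>\<delta>. a \<delta> j) * sign_mean M (\<lambda>\<delta>. b \<delta> j)
      = (1 / 2^M) * (1 / 2^M) * (\<Sum>\<delta>\<in>?P. \<Sum>\<delta>'\<in>?P. a \<delta> j * b \<delta>' j)" for j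
    unfolding sign_mean_def sum_product[symmetric] by (simp add: mult_ac)
  then have "(\<Sum>j<N. sign_mean M (\<lambda>\<delta>. a \<delta> j) * sign_mean M (\<lambda>\<delta>. b \<delta> j))
      = (1 / 2^M) * (1 / 2^M) * (\<Sum>j<N. \<Sum>\<delta>\<in>?P. \<Sum>\<delta>'\<in>?P. a \<delta> j * b \<delta>' j)"
    by (simp add: sum_distrib_left)
  also have "(\<Sum>j<N. \<Sum>\<delta>\<in>?P. \<Sum>\<delta>'\<in>?P. a \<delta> j * b \<delta>' j) = (\<Sum>\<delta>\<in>?P. \<Sum>\<delta>'\<in>?P. \<Sum>j<N. a \<delta> j * b \<delta>' j)"
    by (subst sum.swap) (simp add: sum.swap[of _ "{..<N}"])
  finally show ?thesis
    unfolding sign_mean_def sum_distrib_left[symmetric] by (simp only: mult.assoc)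
qed
definition sign_vector :: "(nat \<Rightarrow> 'n) \<Rightarrow> nat \<Rightarrow> (nat \<Rightarrow> real) \<Rightarrow> complex^'n" where
  "sign_vector h M \<delta> = (\<chi> b. of_real (\<delta> (inv_into {..<M} h b) / sqrt M))"

lemma sign_vector_in_vecs: "K = \<real> \<or> K = UNIV \<Longrightarrow> sign_vector h M \<delta> \<in> vecs K"
  by (auto simp: sign_vector_def vecs_def)

lemma norm_sign_vector:
  fixes h :: "nat \<Rightarrow> 'n::finite"
  assumes dim: "CARD('n) = M" and h: "bij_betw h {..<M} UNIV"
    and \<delta>: "\<delta> \<in> PiE {..<M} (\<lambda>_. {-1, 1::real})"
  shows "norm (sign_vector h M \<delta>) = 1"
proof -
  have "(cmod (sign_vector h M \<delta> $ b))^2 = 1 / M" for b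
  proof -
    have "inv_into {..<M} h b \<in> {..<M}"
      using h by (metis bij_betw_imp_surj_on inv_into_into UNIV_I)
    then have "\<delta> (inv_into {..<M} h b) \<in> {-1, 1}"
      using PiE_mem[OF \<delta>] by blast
    then have "\<bar>\<delta> (inv_into {..<M} h b)\<bar> = 1"
      by auto
    then show ?thesis
      by (simp add: sign_vector_def power_divide norm_divide)
  qed
  moreover have "M > 0"
    unfolding dim[symmetric] by (simp add: card_gt_0_iff)
  ultimately have "(norm (sign_vector h M \<delta>))^2 = 1"
    using dim by (simp add: norm_vec_square)
  then show ?thesis
    using norm_ge_zero[of "sign_vector h M \<delta>"] by (simp add: power2_eq_1_iff)
qed

lemma khintchine_cinner_sign_vector:
  fixes h :: "nat \<Rightarrow> 'n::finite"
  assumes field: "K = \<real> \<or> K = UNIV" and K1: "khintchine_const K K1"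
    and dim: "CARD('n) = M" and h: "bij_betw h {..<M} UNIV" and z: "z \<in> vecs K"
  shows "K1 * norm z / sqrt M \<le> sign_mean M (\<lambda>\<delta>. cmod (cinner (sign_vector h M \<delta>) z))"
proof -
  define a where "a k = cnj (z $ h k)" for k
  have "\<forall>k<M. a k \<in> K"
    using z field by (auto simp: a_def vecs_def Reals_cnj_iff)
  then have "K1 * sqrt (\<Sum>k<M. (cmod (a k))^2)
      \<le> (1 / 2^M) * (\<Sum>\<delta>\<in>PiE {..<M} (\<lambda>_. {-1, 1::real}). cmod (\<Sum>k<M. of_real (\<delta> k) * a k))"
    using K1 unfolding khintchine_const_def by blast
  moreover have "sqrt (\<Sum>k<M. (cmod (a k))^2) = norm z"
    using sum.reindex_bij_betw[OF h, of "\<lambda>b. (cmod (z$b))^2"]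
    by (simp add: a_def norm_vec_square[symmetric])
  ultimately have "K1 * norm z / sqrt M
      \<le> (1 / 2^M) * (\<Sum>\<delta>\<in>PiE {..<M} (\<lambda>_. {-1, 1::real}). cmod (\<Sum>k<M. of_real (\<delta> k) * a k)) / sqrt M"
    by (intro divide_right_mono) auto
  also have "\<dots> = (1 / 2^M) * (\<Sum>\<delta>\<in>PiE {..<M} (\<lambda>_. {-1, 1::real}). cmod (cinner (sign_vector h M \<delta>) z))"
  proof -
    have "cmod (cinner (sign_vector h M \<delta>) z) = cmod (\<Sum>k<M. of_real (\<delta> k) * a k) / sqrt M"
      for \<delta>
    proof -
      have "cinner (sign_vector h M \<delta>) z = (\<Sum>k<M. of_real (\<delta> k) * a k) / of_real (sqrt M)"
        unfolding cinner_def sign_vector_def a_def sum_divide_distrib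
          sum.reindex_bij_betw[OF h, symmetric]
        using bij_betw_inv_into_left[OF h] by (intro sum.cong) auto
      then show ?thesis
        by (simp only: norm_divide norm_of_real) simp
    qed
    then show ?thesis
      by (simp add: sum_divide_distrib mult.commute)
  qed
  finally show ?thesis
    by (simp only: sign_mean_def)
qed

lemma sum_cmod_cinner_products_le:
  fixes xs f :: "nat \<Rightarrow> complex^'n"
  assumes field: "K = \<real> \<or> K = UNIV"
    and xs_in: "\<forall>j<N. xs j \<in> vecs K" and f_in: "\<forall>j<N. f j \<in> vecs K"
    and hyp: "\<forall>x\<in>vecs K. \<forall>\<epsilon>::nat \<Rightarrow> complex. (\<forall>j<N. \<epsilon> j \<in> K \<and> cmod (\<epsilon> j) = 1) \<longrightarrow>
               norm (\<Sum>j<N. (\<epsilon> j * cinner x (f j)) *s xs j) \<le> C * norm x"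
    and x: "x \<in> vecs K" "norm x = 1" and y: "y \<in> vecs K" "norm y = 1"
  shows "(\<Sum>j<N. cmod (cinner x (f j)) * cmod (cinner (xs j) y)) \<le> C"
proof -
  define w where "w j = cinner x (f j) * cinner (xs j) y" for j
  define \<epsilon> where "\<epsilon> j = (if w j = 0 then 1 else cnj (w j) / cmod (w j))" for j
  have \<epsilon>: "\<epsilon> j \<in> K \<and> cmod (\<epsilon> j) = 1" if "j < N" for j
  proof
    show "cmod (\<epsilon> j) = 1" by (simp add: \<epsilon>_def norm_divide)
    have "w j \<in> \<real>" if "K = \<real>"
      unfolding w_def using that x y xs_in f_in \<open>j < N\<close> by (intro Reals_mult cinner_in_Reals) auto
    then show "\<epsilon> j \<in> K"
      using field by (auto simp: \<epsilon>_def Reals_cnj_iff)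
  qed
  have "\<epsilon> j * w j = cmod (w j)" for j
    by (cases "w j = 0") (auto simp: \<epsilon>_def complex_norm_square[symmetric] power2_eq_square mult.commute)
  then have "cinner (\<Sum>j<N. (\<epsilon> j * cinner x (f j)) *s xs j) y = (\<Sum>j<N. cmod (w j))"
    by (simp add: cinner_sum_left cinner_scale_left w_def mult.assoc)
  then have "(\<Sum>j<N. cmod (w j)) = cmod (cinner (\<Sum>j<N. (\<epsilon> j * cinner x (f j)) *s xs j) y)"
    by (simp only: norm_of_real) (simp add: sum_nonneg)
  also have "\<dots> \<le> norm (\<Sum>j<N. (\<epsilon> j * cinner x (f j)) *s xs j) * norm y"
    by (rule cmod_cinner_le)
  also have "\<dots> \<le> C"
    using hyp x y \<epsilon> by auto
  finally show ?thesis by (simp add: w_def norm_mult)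
qed

lemma khintchine_sum_norm_products_le:
  fixes xs f :: "nat \<Rightarrow> complex^'n" and C :: real
  assumes field: "K = \<real> \<or> K = UNIV" and K1: "khintchine_const K K1" and dim: "CARD('n) = M"
    and xs_in: "\<forall>j<N. xs j \<in> vecs K" and f_in: "\<forall>j<N. f j \<in> vecs K"
    and hyp: "\<forall>x\<in>vecs K. \<forall>\<epsilon>::nat \<Rightarrow> complex. (\<forall>j<N. \<epsilon> j \<in> K \<and> cmod (\<epsilon> j) = 1) \<longrightarrow>
               norm (\<Sum>j<N. (\<epsilon> j * cinner x (f j)) *s xs j) \<le> C * norm x"
  shows "K1^2 * (\<Sum>j<N. norm (f j) * norm (xs j)) \<le> M * C"
proof -
  have "M > 0"
    unfolding dim[symmetric] by (simp add: card_gt_0_iff)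
  have "K1 > 0"
    using K1 by (simp add: khintchine_const_def)
  obtain h where h: "bij_betw h {..<M} (UNIV::'n set)"
    using ex_bij_betw_nat_finite[of "UNIV::'n set"] dim by (auto simp: atLeast0LessThan)
  define v where "v = sign_vector h M"
  define a where "a \<delta> j = cmod (cinner (v \<delta>) (f j))" for \<delta> j
  define b where "b \<delta> j = cmod (cinner (xs j) (v \<delta>))" for \<delta> j
  have "K1^2 / M * (norm (f j) * norm (xs j)) \<le> sign_mean M (\<lambda>\<delta>. a \<delta> j) * sign_mean M (\<lambda>\<delta>. b \<delta> j)"
    if "j < N" for j
  proof -
    have "K1 * norm (f j) / sqrt M \<le> sign_mean M (\<lambda>\<delta>. a \<delta> j)"
      unfolding a_def v_def using f_in that by (intro khintchine_cinner_sign_vector[OF field K1 dim h]) auto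
    moreover have "K1 * norm (xs j) / sqrt M \<le> sign_mean M (\<lambda>\<delta>. b \<delta> j)"
      unfolding b_def v_def cinner_commute[of "xs j"] complex_mod_cnj
      using xs_in that by (intro khintchine_cinner_sign_vector[OF field K1 dim h]) auto
    ultimately have "(K1 * norm (f j) / sqrt M) * (K1 * norm (xs j) / sqrt M)
        \<le> sign_mean M (\<lambda>\<delta>. a \<delta> j) * sign_mean M (\<lambda>\<delta>. b \<delta> j)"
      using \<open>K1 > 0\<close> by (intro mult_mono') auto
    then show ?thesis
      using \<open>M > 0\<close> by (simp add: power2_eq_square mult_ac)
  qed
  then have "K1^2 / M * (\<Sum>j<N. norm (f j) * norm (xs j))
      \<le> (\<Sum>j<N. sign_mean M (\<lambda>\<delta>. a \<delta> j) * sign_mean M (\<lambda>\<delta>. b \<delta> j))"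
    unfolding sum_distrib_left by (intro sum_mono) auto
  also have "\<dots> = sign_mean M (\<lambda>\<delta>. sign_mean M (\<lambda>\<delta>'. \<Sum>j<N. a \<delta> j * b \<delta>' j))"
    by (rule sum_sign_mean_mult)
  also have "\<dots> \<le> sign_mean M (\<lambda>\<delta>. sign_mean M (\<lambda>\<delta>'. C))"
    using sum_cmod_cinner_products_le[OF field xs_in f_in hyp]
      sign_vector_in_vecs[OF field] norm_sign_vector[OF dim h]
    unfolding a_def b_def v_def by (intro sign_mean_mono) blast
  also have "\<dots> = C"
    by simp
  finally show ?thesis
    using \<open>M > 0\<close> by (simp add: field_simps)
qed

lemma bessel_bound_eigenvalue_spread:
  fixes g :: "nat \<Rightarrow> complex^'n" and K1 C \<beta> :: real
  assumes dim: "CARD('n) = M" and K1: "0 < K1" "K1 \<le> 1" and C: "0 < C" and \<beta>: "0 < \<beta>"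
    and eigen: "has_ordered_eigenvalues K (frame_op g N) M lam"
    and spread: "lam 0 \<le> \<beta> / M * (\<Sum>i<M. lam i)"
    and trace: "K1^2 * (\<Sum>j<N. (norm (g j))^2) \<le> M * C"
  shows "bessel_bound K g N (27 / 4 / K1^4 * \<beta>^2 * C)"
proof -
  have "M > 0"
    unfolding dim[symmetric] by (simp add: card_gt_0_iff)
  obtain bessel: "bessel_bound K g N (lam 0)"
    and "(\<Sum>i<M. lam i) = (\<Sum>j<N. (norm (g j))^2)" and "(\<Sum>i<M. lam i) \<le> M * lam 0"
    by (rule has_ordered_eigenvalues_frame_opE[OF eigen dim])
  then have "lam 0 \<le> 27 / 4 / K1^4 * \<beta>^2 * C"
    using le_khintchine_bessel_constant[OF K1 C \<beta>, where a = "(\<Sum>j<N. (norm (g j))^2) / M"]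
      spread trace \<open>M > 0\<close> by (simp add: field_simps)
  with bessel show ?thesis
    by (rule bessel_bound_mono)
qed

lemma bessel_bound_condition_number:
  fixes f :: "nat \<Rightarrow> complex^'n" and K1 C \<beta> :: real
  assumes field: "K = \<real> \<or> K = UNIV"
    and dim: "CARD('n) = M" and K1: "0 < K1" "K1 \<le> 1" and C: "0 < C" and \<beta>: "0 < \<beta>"
    and frame: "is_frame K f N" and cond: "condition_number K f N = \<beta>"
    and trace: "K1^2 * (\<Sum>j<N. (norm (f j))^2) \<le> M * C"
  shows "bessel_bound K f N (27 / 4 / K1^4 * \<beta>^2 * C)"
proof -
  have "M > 0"
    unfolding dim[symmetric] by (simp add: card_gt_0_iff)
  have "opt_upper_bound K f N = \<beta> * opt_lower_bound K f N"
    using cond opt_lower_bound_pos[OF field frame] by (simp add: condition_number_def field_simps)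
  then have "opt_upper_bound K f N \<le> 27 / 4 / K1^4 * \<beta>^2 * C"
    using le_khintchine_bessel_constant[OF K1 C \<beta>, where a = "(\<Sum>j<N. (norm (f j))^2) / M"]
      sum_norms_square_between_opt_bounds[OF field frame dim] trace \<beta> \<open>M > 0\<close>
    by (simp add: field_simps)
  with bessel_bound_opt_upper_bound[OF field frame] show ?thesis
    by (rule bessel_bound_mono)
qed

theorem theorem4p6:
  fixes K :: "complex set" and C \<beta> K1 :: real and N M :: nat
    and xs f :: "nat \<Rightarrow> complex^'n"
  assumes field: "K = \<real> \<or> K = UNIV"
    and K1: "khintchine_const K K1"
    and Cpos: "C > 0" and betapos: "\<beta> > 0"
    and dim: "CARD('n) = M"
    and xs_in: "\<forall>j<N. xs j \<in> vecs K" and f_in: "\<forall>j<N. f j \<in> vecs K"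
    and norms: "\<forall>j<N. norm (xs j) = norm (f j)"
    and hyp: "\<forall>x\<in>vecs K. \<forall>\<epsilon>::nat \<Rightarrow> complex. (\<forall>j<N. \<epsilon> j \<in> K \<and> cmod (\<epsilon> j) = 1) \<longrightarrow>
               norm (\<Sum>j<N. (\<epsilon> j * cinner x (f j)) *s xs j) \<le> C * norm x"
  shows
    "(\<forall>lam. has_ordered_eigenvalues K (frame_op f N) M lam \<and>
            lam 0 \<le> \<beta> / real M * (\<Sum>j<M. lam j)
        \<longrightarrow> bessel_bound K f N (27 / 4 / K1^4 * \<beta>^2 * C))
     \<and> (is_frame K f N \<and> condition_number K f N = \<beta>
        \<longrightarrow> bessel_bound K f N (27 / 4 / K1^4 * \<beta>^2 * C))
     \<and> (tight_frame K f N \<longrightarrow> bessel_bound K f N (27 / 4 / K1^4 * C))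
     \<and> (\<forall>lam. has_ordered_eigenvalues K (frame_op xs N) M lam \<and>
            lam 0 \<le> \<beta> / real M * (\<Sum>j<M. lam j)
        \<longrightarrow> bessel_bound K xs N (27 / 4 / K1^4 * \<beta>^2 * C))"
proof -
  have K1_bounds: "0 < K1" "K1 \<le> 1"
    using K1 khintchine_const_le_1[OF field] by (auto simp: khintchine_const_def)
  have products: "K1^2 * (\<Sum>j<N. norm (f j) * norm (xs j)) \<le> M * C"
    by (rule khintchine_sum_norm_products_le[OF field K1 dim xs_in f_in hyp])
  have "(\<Sum>j<N. norm (f j) * norm (xs j)) = (\<Sum>j<N. (norm (f j))^2)"
    and "(\<Sum>j<N. norm (f j) * norm (xs j)) = (\<Sum>j<N. (norm (xs j))^2)"
    using norms by (auto intro!: sum.cong simp: power2_eq_square)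
  with products have trace_f: "K1^2 * (\<Sum>j<N. (norm (f j))^2) \<le> M * C"
    and trace_xs: "K1^2 * (\<Sum>j<N. (norm (xs j))^2) \<le> M * C"
    by simp_all
  show ?thesis
    using bessel_bound_eigenvalue_spread[OF dim K1_bounds Cpos betapos _ _ trace_f]
      bessel_bound_eigenvalue_spread[OF dim K1_bounds Cpos betapos _ _ trace_xs]
      bessel_bound_condition_number[OF field dim K1_bounds Cpos betapos _ _ trace_f]
      bessel_bound_condition_number[OF field dim K1_bounds Cpos _ _ _ trace_f, of 1]
    unfolding tight_frame_def by auto
qed

end
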